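(* Let $\Bbbk$ be a field, $R=\Bbbk[x_1,\dots,x_m]$ with the standard $\mathbb Z^m$-grading, and let $\mathcal F_\bullet$ be a $\mathbb Z^m$-graded minimal free resolution of a finitely generated $\mathbb Z^m$-graded $R$-module $M$, with differentials $f_n$ and $f_0\colon F_0\to M$ the augmentation. Let $B=\coprod_n B_n$ be a basis of $\mathcal F_\bullet$ consisting of homogeneous elements. Let $\overline{\mathcal F}_\bullet=\mathcal F_\bullet\otimes_R R/(x_1-1,\dots,x_m-1)$ (a complex of $\Bbbk$-vector spaces with differentials $\bar f_n$, and $\bar f_0\colon\overline F_0\to H_0(\overline{\mathcal F}_\bullet)$ the canonical projection), and let $\overline B$ be the basis of $\overline{\mathcal F}_\bullet$ induced by $B$. Then: (a) for each $n\ge1$ and each $\bar b\in\overline B_n$ one has $\bar f_n(\bar b)\ne0$; (b) if $\overline B$ is a basis with minimal support for $\overline{\mathcal F}_\bullet$, then $B$ is a basis with minimal support for $\mathcal F_\bullet$; (c) if $B$ is a basis with minimal support for $\mathcal F_\bullet$ and $M$ is torsion-free, then $\overline B$ is a basis with minimal support for $\overline{\mathcal F}_\bullet$.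
   Context: Let $\mathcal F_\bullet: 0\leftarrow F_0\leftarrow F_1\leftarrow\cdots\leftarrow F_l\leftarrow0$ be a complex of free modules of finite rank over a ring, with differentials $f_n\colon F_n\to F_{n-1}$, and let $f_0\colon F_0\to H_0(\mathcal F_\bullet)$ be the canonical projection. Let $B_n$ be a basis of $F_n$ and $B=\coprod B_n$. For $y=\sum_{c\in B_n}a_cc\in F_n$, its support is $\operatorname{supp}y=\{c\in B_n: a_c\neq0\}$. An element $y\in F_n$ is a cycle with minimal support (relative to $B$) if $y\in\operatorname{Ker}f_n$ and $\operatorname{supp}y$ does not properly contain the support of any nonzero element of $\operatorname{Ker}f_n$. For $y\in F_n$, $n\ge1$, the boundary support of $y$ is $\operatorname{supp}f_n(y)$. $B$ is a basis with minimal support for $\mathcal F_\bullet$ if for every $n\ge1$ and every $b\in B_n$, $f_n(b)$ is a cycle with minimal support. A $\mathbb Z^m$-graded free resolution is minimal if its differentials are homogeneous of degree $0$ and $f_n(F_n)\subseteq\mathfrak m F_{n-1}$ for $n\ge1$, where $\mathfrak m=(x_1,\dots,x_m)$. *)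

theory Defs
  imports "HOL-Library.Poly_Mapping"
begin

(* Polynomials over 'k in the variables x_0, x_1, ...: finitely supported maps
   from exponent vectors (monomials) to coefficients. *)
type_synonym 'k mpoly = "(nat \<Rightarrow>\<^sub>0 nat) \<Rightarrow>\<^sub>0 'k"

(* R = k[x_1,...,x_m]: polynomials only involving the first m variables *)
definition poly_ring :: "nat \<Rightarrow> ('k::zero) mpoly set" where
  "poly_ring m = {p. \<forall>\<alpha>\<in>Poly_Mapping.keys p. Poly_Mapping.keys (\<alpha>::nat \<Rightarrow>\<^sub>0 nat) \<subseteq> {..<m}}"

(* membership in the maximal ideal (x_1,...,x_m) of R: zero constant term *)
definition in_max_ideal :: "nat \<Rightarrow> ('k::zero) mpoly \<Rightarrow> bool" where
  "in_max_ideal m p \<longleftrightarrow> p \<in> poly_ring m \<and> Poly_Mapping.lookup p 0 = 0"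

(* p is Z^m-homogeneous of multidegree d (the zero polynomial is homogeneous of every degree) *)
definition homog_of_deg :: "(nat \<Rightarrow> int) \<Rightarrow> ('k::zero) mpoly \<Rightarrow> bool" where
  "homog_of_deg d p \<longleftrightarrow> (\<forall>\<alpha>\<in>Poly_Mapping.keys p. \<forall>i. int (Poly_Mapping.lookup \<alpha> i) = d i)"

(* the quotient map R \<rightarrow> R/(x_1 - 1,...,x_m - 1) = k, i.e. evaluation at (1,...,1) *)
definition eval_at_one :: "('k::comm_ring_1) mpoly \<Rightarrow> 'k" where
  "eval_at_one p = (\<Sum>\<alpha>\<in>Poly_Mapping.keys p. Poly_Mapping.lookup p \<alpha>)"

(* ---------- complexes of free modules of finite rank with a chosen basis ----------
   F_n is the free module with basis B n over the coefficient ring with carrier K;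
   an element of F_n is its coordinate function 'b \<Rightarrow> 'r (zero outside B n).
   The differential f_n : F_n \<rightarrow> F_(n-1), n \<ge> 1, is given by its matrix D n:
   f_n(b) = \<Sum>_{c \<in> B(n-1)} D n b c \<cdot> c. *)

definition cx_elems :: "'r set \<Rightarrow> (nat \<Rightarrow> 'b set) \<Rightarrow> nat \<Rightarrow> ('b \<Rightarrow> 'r::zero) set" where
  "cx_elems K B n = {y. (\<forall>c. c \<notin> B n \<longrightarrow> y c = 0) \<and> (\<forall>c. y c \<in> K)}"

definition cx_diff :: "(nat \<Rightarrow> 'b set) \<Rightarrow> (nat \<Rightarrow> 'b \<Rightarrow> 'b \<Rightarrow> 'r::comm_semiring_0)
    \<Rightarrow> nat \<Rightarrow> ('b \<Rightarrow> 'r) \<Rightarrow> ('b \<Rightarrow> 'r)" where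
  "cx_diff B D n y = (\<lambda>c. if c \<in> B (n - 1) then (\<Sum>b\<in>B n. y b * D n b c) else 0)"

definition cx_image :: "'r set \<Rightarrow> (nat \<Rightarrow> 'b set) \<Rightarrow> (nat \<Rightarrow> 'b \<Rightarrow> 'b \<Rightarrow> 'r::comm_semiring_0)
    \<Rightarrow> nat \<Rightarrow> ('b \<Rightarrow> 'r) set" where
  "cx_image K B D n = cx_diff B D (Suc n) ` cx_elems K B (Suc n)"

(* Ker f_n; for n = 0, f_0 is the canonical projection F_0 \<rightarrow> H_0, whose kernel is Im f_1 *)
definition cx_ker :: "'r set \<Rightarrow> (nat \<Rightarrow> 'b set) \<Rightarrow> (nat \<Rightarrow> 'b \<Rightarrow> 'b \<Rightarrow> 'r::comm_semiring_0)
    \<Rightarrow> nat \<Rightarrow> ('b \<Rightarrow> 'r) set" where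
  "cx_ker K B D n = (if n = 0 then cx_image K B D 0
                     else {y \<in> cx_elems K B n. cx_diff B D n y = (\<lambda>_. 0)})"

definition cx_supp :: "(nat \<Rightarrow> 'b set) \<Rightarrow> nat \<Rightarrow> ('b \<Rightarrow> 'r::zero) \<Rightarrow> 'b set" where
  "cx_supp B n y = {c \<in> B n. y c \<noteq> 0}"

definition cycle_min_supp :: "'r set \<Rightarrow> (nat \<Rightarrow> 'b set) \<Rightarrow> (nat \<Rightarrow> 'b \<Rightarrow> 'b \<Rightarrow> 'r::comm_semiring_0)
    \<Rightarrow> nat \<Rightarrow> ('b \<Rightarrow> 'r) \<Rightarrow> bool" where
  "cycle_min_supp K B D n y \<longleftrightarrow> y \<in> cx_ker K B D n \<and>
     \<not> (\<exists>z\<in>cx_ker K B D n. z \<noteq> (\<lambda>_. 0) \<and> cx_supp B n z \<subset> cx_supp B n y)"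

definition basis_vec :: "'b \<Rightarrow> ('b \<Rightarrow> 'r::{zero,one})" where
  "basis_vec b = (\<lambda>c. if c = b then 1 else 0)"

definition basis_min_supp :: "'r set \<Rightarrow> (nat \<Rightarrow> 'b set) \<Rightarrow> (nat \<Rightarrow> 'b \<Rightarrow> 'b \<Rightarrow> 'r::comm_semiring_1)
    \<Rightarrow> bool" where
  "basis_min_supp K B D \<longleftrightarrow>
     (\<forall>n\<ge>1. \<forall>b\<in>B n. cycle_min_supp K B D (n - 1) (cx_diff B D n (basis_vec b)))"

(* A Z^m-graded minimal free resolution F_0 \<leftarrow> F_1 \<leftarrow> ... \<leftarrow> F_l \<leftarrow> 0 over R = k[x_1..x_m]
   of M = H_0 = coker f_1, with homogeneous basis B (basis element b \<in> B n has
   multidegree deg n b \<in> Z^m, encoded as a function nat \<Rightarrow> int vanishing from m on). *)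
definition min_graded_free_res :: "nat \<Rightarrow> nat \<Rightarrow> (nat \<Rightarrow> 'b set)
    \<Rightarrow> (nat \<Rightarrow> 'b \<Rightarrow> 'b \<Rightarrow> ('k::field) mpoly) \<Rightarrow> (nat \<Rightarrow> 'b \<Rightarrow> nat \<Rightarrow> int) \<Rightarrow> bool" where
  "min_graded_free_res m l B D deg \<longleftrightarrow>
     (\<forall>n. finite (B n)) \<and> (\<forall>n>l. B n = {}) \<and>
     (\<forall>n. \<forall>b\<in>B n. \<forall>i\<ge>m. deg n b i = 0) \<and>
     (\<forall>n\<ge>1. \<forall>b\<in>B n. \<forall>c\<in>B (n - 1).
        D n b c \<in> poly_ring m \<and>
        homog_of_deg (\<lambda>i. deg n b i - deg (n - 1) c i) (D n b c) \<and>
        in_max_ideal m (D n b c)) \<and>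
     (\<forall>n\<ge>1. cx_ker (poly_ring m) B D n = cx_image (poly_ring m) B D n)"

definition coker_torsion_free :: "nat \<Rightarrow> (nat \<Rightarrow> 'b set) \<Rightarrow> (nat \<Rightarrow> 'b \<Rightarrow> 'b \<Rightarrow> ('k::field) mpoly) \<Rightarrow> bool" where
  "coker_torsion_free m B D \<longleftrightarrow>
     (\<forall>r\<in>poly_ring m. r \<noteq> 0 \<longrightarrow> (\<forall>y\<in>cx_elems (poly_ring m) B 0.
        (\<lambda>c. r * y c) \<in> cx_image (poly_ring m) B D 0 \<longrightarrow> y \<in> cx_image (poly_ring m) B D 0))"

definition bar_diff :: "(nat \<Rightarrow> 'b \<Rightarrow> 'b \<Rightarrow> ('k::field) mpoly) \<Rightarrow> nat \<Rightarrow> 'b \<Rightarrow> 'b \<Rightarrow> 'k" where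
  "bar_diff D n b c = eval_at_one (D n b c)"

end

theory Submission
  imports Defs "HOL-Library.Function_Algebras"
begin

text \<open>Every entry of \<open>f\<^sub>n\<close> is
  \<open>\<int>\<^sup>m\<close>-homogeneous, hence a single term \<open>a x\<^sup>\<alpha>\<close>, and the corresponding entry of \<open>fbar\<^sub>n\<close>
  is \<open>a\<close>; so \<open>f\<^sub>n(b)\<close> and \<open>fbar\<^sub>n(b)\<close> have the same support.
  (a) If \<open>fbar\<^sub>n(b) = 0\<close> then \<open>b \<in> Ker f\<^sub>n = Im f\<^sub>n\<^sub>+\<^sub>1\<close>, whose coordinates all lie in the
  maximal ideal, which is absurd.
  (b) A nonzero cycle of \<open>F\<close> with smaller support than \<open>f\<^sub>n(b)\<close> has a nonzero homogeneous
  component; setting all variables to \<open>1\<close> turns it into a nonzero cycle of \<open>Fbar\<close> whose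
  support is no larger.
  (c) Conversely, multiplying the coordinates of a cycle of \<open>Fbar\<close> by suitable monomials gives
  a cycle of \<open>F\<close> with the same support.\<close>

lemma lookup_mult_single:
  fixes p :: "('a::cancel_comm_monoid_add) \<Rightarrow>\<^sub>0 'r::comm_semiring_1"
  shows "Poly_Mapping.lookup (p * Poly_Mapping.single \<alpha> a) \<gamma>
           = (\<Sum>\<beta>. Poly_Mapping.lookup p \<beta> * a when \<gamma> = \<beta> + \<alpha>)"
proof -
  have "(\<Sum>q. Poly_Mapping.lookup (Poly_Mapping.single \<alpha> a) q when \<gamma> = \<beta> + q) = (a when \<gamma> = \<beta> + \<alpha>)"
    for \<beta>
  proof -
    have "(\<lambda>q. Poly_Mapping.lookup (Poly_Mapping.single \<alpha> a) q when \<gamma> = \<beta> + q)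
        = (\<lambda>q. (a when \<gamma> = \<beta> + q) when q = \<alpha>)"
      by (auto simp: lookup_single when_def)
    then show ?thesis
      using Sum_any_when_equal[of "\<lambda>q. a when \<gamma> = \<beta> + q" \<alpha>] by (simp only:)
  qed
  then show ?thesis
    by (simp add: lookup_mult mult_when)
qed

lemma lookup_mult_single_add:
  fixes p :: "('a::cancel_comm_monoid_add) \<Rightarrow>\<^sub>0 'r::comm_semiring_1"
  shows "Poly_Mapping.lookup (p * Poly_Mapping.single \<alpha> a) (\<beta> + \<alpha>) = Poly_Mapping.lookup p \<beta> * a"
  by (simp add: lookup_mult_single)

lemma lookup_mult_single_eq_0:
  fixes p :: "('a::cancel_comm_monoid_add) \<Rightarrow>\<^sub>0 'r::comm_semiring_1"
  assumes "\<gamma> \<notin> range (\<lambda>\<beta>. \<beta> + \<alpha>)"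
  shows "Poly_Mapping.lookup (p * Poly_Mapping.single \<alpha> a) \<gamma> = 0"
proof -
  have "\<gamma> \<noteq> \<beta> + \<alpha>" for \<beta>
    using assms by blast
  then show ?thesis
    by (simp add: lookup_mult_single)
qed

lemma lookup_mult_0:
  fixes p q :: "'r::comm_semiring_1 mpoly"
  shows "Poly_Mapping.lookup (p * q) 0 = Poly_Mapping.lookup p 0 * Poly_Mapping.lookup q 0"
proof -
  have sum_0: "\<beta> + \<gamma> = 0 \<longleftrightarrow> \<beta> = 0 \<and> \<gamma> = 0" for \<beta> \<gamma> :: "nat \<Rightarrow>\<^sub>0 nat"
    by (metis add_cancel_right_left add_is_0 lookup_add lookup_zero poly_mapping_eqI)
  have "(\<Sum>\<gamma>. Poly_Mapping.lookup q \<gamma> when 0 = \<beta> + \<gamma>) = (Poly_Mapping.lookup q 0 when \<beta> = 0)" for \<beta>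
    by (cases "\<beta> = 0") (simp_all add: sum_0 eq_commute[of 0])
  then show ?thesis
    by (simp add: lookup_mult mult_when)
qed

lemma single_sum: "Poly_Mapping.single k (sum f S) = (\<Sum>x\<in>S. Poly_Mapping.single k (f x))"
  by (induction S rule: infinite_finite_induct) (simp_all add: single_add)

definition int_exp :: "(nat \<Rightarrow>\<^sub>0 nat) \<Rightarrow> nat \<Rightarrow> int" where
  "int_exp \<alpha> = (\<lambda>i. int (Poly_Mapping.lookup \<alpha> i))"

lemma inj_int_exp: "inj int_exp"
  by (rule injI) (simp add: int_exp_def fun_eq_iff poly_mapping_eqI)

lemma int_exp_0 [simp]: "int_exp 0 = 0"
  by (simp add: int_exp_def fun_eq_iff)

lemma int_exp_add: "int_exp (\<alpha> + \<beta>) = int_exp \<alpha> + int_exp \<beta>"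
  by (simp add: int_exp_def lookup_add fun_eq_iff)

lemma inv_int_exp [simp]: "inv int_exp (int_exp \<alpha>) = \<alpha>"
  by (rule inv_f_f[OF inj_int_exp])

lemma range_int_exp: "d \<in> range int_exp \<longleftrightarrow> (\<forall>i. 0 \<le> d i) \<and> finite {i. d i \<noteq> 0}"
proof
  assume "d \<in> range int_exp"
  then obtain \<alpha> where d: "d = int_exp \<alpha>"
    by blast
  have "{i. d i \<noteq> 0} = Poly_Mapping.keys \<alpha>"
    by (auto simp: d int_exp_def in_keys_iff)
  then show "(\<forall>i. 0 \<le> d i) \<and> finite {i. d i \<noteq> 0}"
    by (simp add: d int_exp_def)
next
  assume d: "(\<forall>i. 0 \<le> d i) \<and> finite {i. d i \<noteq> 0}"
  then have "finite {i. nat (d i) \<noteq> 0}"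
    by (auto elim: finite_subset[rotated])
  then have "int_exp (Abs_poly_mapping (\<lambda>i. nat (d i))) = d"
    using d by (simp add: int_exp_def fun_eq_iff)
  then show "d \<in> range int_exp"
    by (metis rangeI)
qed

lemma homog_of_deg_iff: "homog_of_deg d p \<longleftrightarrow> (\<forall>\<alpha>\<in>Poly_Mapping.keys p. int_exp \<alpha> = d)"
  by (auto simp: homog_of_deg_def int_exp_def fun_eq_iff)

lemma eval_at_one_single [simp]: "eval_at_one (Poly_Mapping.single \<alpha> a) = a"
  by (simp add: eval_at_one_def)

lemma homog_of_degE:
  fixes p :: "'k::comm_ring_1 mpoly"
  assumes "homog_of_deg d p" and "p \<noteq> 0"
  obtains \<alpha> a where "int_exp \<alpha> = d" and "a \<noteq> 0" and "p = Poly_Mapping.single \<alpha> a"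
proof -
  obtain \<alpha> where \<alpha>: "\<alpha> \<in> Poly_Mapping.keys p"
    using assms(2) by (metis all_not_in_conv keys_eq_empty)
  have exp: "int_exp \<alpha> = d"
    using assms(1) \<alpha> by (simp add: homog_of_deg_iff)
  have "\<beta> = \<alpha>" if "\<beta> \<in> Poly_Mapping.keys p" for \<beta>
  proof -
    have "int_exp \<beta> = int_exp \<alpha>"
      using that assms(1) exp by (simp add: homog_of_deg_iff)
    then show ?thesis
      by (simp add: inj_eq[OF inj_int_exp])
  qed
  then have "p = Poly_Mapping.single \<alpha> (Poly_Mapping.lookup p \<alpha>)"
    by (intro poly_mapping_eqI) (auto simp: lookup_single when_def in_keys_iff)
  with exp \<alpha> show ?thesis
    by (intro that) (auto simp: in_keys_iff)
qed

lemma homog_eval_at_one_eq_0_iff: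
  fixes p :: "'k::comm_ring_1 mpoly"
  assumes "homog_of_deg d p"
  shows "eval_at_one p = 0 \<longleftrightarrow> p = 0"
proof
  assume "eval_at_one p = 0"
  show "p = 0"
  proof (rule ccontr)
    assume "p \<noteq> 0"
    with assms obtain \<alpha> a where "a \<noteq> 0" and "p = Poly_Mapping.single \<alpha> a"
      by (rule homog_of_degE)
    with \<open>eval_at_one p = 0\<close> show False
      by simp
  qed
qed (simp add: eval_at_one_def)

text \<open>The coefficient of \<open>x\<^sup>d\<close>, and \<open>0\<close> when \<open>d\<close> is not an exponent vector (e.g. has a negative entry).\<close>

definition coeff_of_deg :: "(nat \<Rightarrow> int) \<Rightarrow> ('r::zero) mpoly \<Rightarrow> 'r" where
  "coeff_of_deg d p = (if d \<in> range int_exp then Poly_Mapping.lookup p (inv int_exp d) else 0)"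

lemma coeff_of_deg_int_exp [simp]: "coeff_of_deg (int_exp \<alpha>) p = Poly_Mapping.lookup p \<alpha>"
  by (simp add: coeff_of_deg_def)

lemma coeff_of_deg_0 [simp]: "coeff_of_deg d 0 = 0"
  by (simp add: coeff_of_deg_def)

lemma coeff_of_deg_sum: "coeff_of_deg d (sum f S) = (\<Sum>x\<in>S. coeff_of_deg d (f x))"
  by (simp add: coeff_of_deg_def lookup_sum)

lemma coeff_of_deg_mult_single:
  fixes p :: "'r::comm_semiring_1 mpoly"
  shows "coeff_of_deg d (p * Poly_Mapping.single \<alpha> a) = coeff_of_deg (d - int_exp \<alpha>) p * a"
proof (cases "d - int_exp \<alpha> \<in> range int_exp")
  case True
  then obtain \<beta> where \<beta>: "int_exp \<beta> = d - int_exp \<alpha>"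
    by (metis rangeE)
  then have "d = int_exp (\<beta> + \<alpha>)"
    by (simp add: int_exp_add)
  then have "coeff_of_deg d (p * Poly_Mapping.single \<alpha> a) = Poly_Mapping.lookup p \<beta> * a"
    by (simp only: coeff_of_deg_int_exp lookup_mult_single_add)
  then show ?thesis
    by (simp flip: \<beta>)
next
  case False
  have "coeff_of_deg d (p * Poly_Mapping.single \<alpha> a) = 0"
  proof (cases "d \<in> range int_exp")
    case True
    then obtain \<gamma> where \<gamma>: "d = int_exp \<gamma>"
      by blast
    have "\<gamma> \<notin> range (\<lambda>\<beta>. \<beta> + \<alpha>)"
      using False by (auto simp: \<gamma> int_exp_add)
    then show ?thesis
      by (simp add: \<gamma> lookup_mult_single_eq_0)
  qed (simp add: coeff_of_deg_def)
  with False show ?thesis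
    by (simp add: coeff_of_deg_def)
qed

lemma coeff_of_deg_mult_homog:
  fixes p q :: "'k::comm_ring_1 mpoly"
  assumes "homog_of_deg e q"
  shows "coeff_of_deg d (p * q) = coeff_of_deg (d - e) p * eval_at_one q"
proof (cases "q = 0")
  case False
  with assms obtain \<alpha> a where "int_exp \<alpha> = e" and "q = Poly_Mapping.single \<alpha> a"
    by (rule homog_of_degE)
  then show ?thesis
    using coeff_of_deg_mult_single[of d p \<alpha> a] by simp
qed (simp add: eval_at_one_def)

lemma cx_diff_basis_vec:
  fixes E :: "nat \<Rightarrow> 'b \<Rightarrow> 'b \<Rightarrow> 'r::comm_semiring_1"
  assumes "finite (B n)" and "b \<in> B n"
  shows "cx_diff B E n (basis_vec b) = (\<lambda>c. if c \<in> B (n - 1) then E n b c else 0)"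
proof -
  have coord: "(\<Sum>b'\<in>B n. basis_vec b b' * E n b' c) = E n b c" for c
  proof -
    have "(\<Sum>b'\<in>B n. basis_vec b b' * E n b' c) = (\<Sum>b'\<in>B n. if b' = b then E n b' c else 0)"
      by (rule sum.cong) (auto simp: basis_vec_def)
    with assms show ?thesis
      by simp
  qed
  show ?thesis
    unfolding cx_diff_def coord ..
qed

lemma basis_vec_in_cx_elems:
  "0 \<in> K \<Longrightarrow> 1 \<in> K \<Longrightarrow> b \<in> B n \<Longrightarrow> basis_vec b \<in> cx_elems K B n"
  by (simp add: cx_elems_def basis_vec_def)

lemma cx_ker_chain_map:
  fixes \<phi> :: "nat \<Rightarrow> ('b \<Rightarrow> 'r::comm_semiring_0) \<Rightarrow> ('b \<Rightarrow> 's::comm_semiring_0)"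
  assumes comm: "\<And>j y. 1 \<le> j \<Longrightarrow> \<phi> (j - 1) (cx_diff B D j y) = cx_diff B E j (\<phi> j y)"
    and elems: "\<And>j y. y \<in> cx_elems K B j \<Longrightarrow> \<phi> j y \<in> cx_elems L B j"
    and zero: "\<And>j. \<phi> j (\<lambda>_. 0) = (\<lambda>_. 0)"
    and z: "z \<in> cx_ker K B D k"
  shows "\<phi> k z \<in> cx_ker L B E k"
proof (cases "k = 0")
  case True
  with z obtain w where w: "w \<in> cx_elems K B (Suc 0)" and "z = cx_diff B D (Suc 0) w"
    by (auto simp: cx_ker_def cx_image_def)
  then have "\<phi> k z = cx_diff B E (Suc 0) (\<phi> (Suc 0) w)"
    using comm[of "Suc 0" w] True by simp
  with True elems[OF w] show ?thesis
    by (simp add: cx_ker_def cx_image_def)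
next
  case False
  with z have "z \<in> cx_elems K B k" and "cx_diff B D k z = (\<lambda>_. 0)"
    by (auto simp: cx_ker_def)
  with False comm[of k z] zero elems show ?thesis
    by (simp add: cx_ker_def)
qed

lemma cycle_min_supp_transfer:
  assumes min: "cycle_min_supp K B D k y"
    and ker: "y' \<in> cx_ker K' B D' k"
    and supp: "cx_supp B k y' = cx_supp B k y"
    and shrink: "\<And>z. z \<in> cx_ker K' B D' k \<Longrightarrow> z \<noteq> (\<lambda>_. 0) \<Longrightarrow>
       \<exists>z'\<in>cx_ker K B D k. z' \<noteq> (\<lambda>_. 0) \<and> cx_supp B k z' \<subseteq> cx_supp B k z"
  shows "cycle_min_supp K' B D' k y'"
  unfolding cycle_min_supp_def
proof (intro conjI notI)
  assume "\<exists>z\<in>cx_ker K' B D' k. z \<noteq> (\<lambda>_. 0) \<and> cx_supp B k z \<subset> cx_supp B k y'"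
  then obtain z where "z \<in> cx_ker K' B D' k" "z \<noteq> (\<lambda>_. 0)" and z: "cx_supp B k z \<subset> cx_supp B k y"
    using supp by auto
  then obtain z' where "z' \<in> cx_ker K B D k" "z' \<noteq> (\<lambda>_. 0)" "cx_supp B k z' \<subseteq> cx_supp B k z"
    using shrink by blast
  with z min show False
    unfolding cycle_min_supp_def by blast
qed (fact ker)

locale graded_min_res =
  fixes m l :: nat
    and B :: "nat \<Rightarrow> 'b set"
    and D :: "nat \<Rightarrow> 'b \<Rightarrow> 'b \<Rightarrow> ('k::field) mpoly"
    and deg :: "nat \<Rightarrow> 'b \<Rightarrow> nat \<Rightarrow> int"
  assumes res: "min_graded_free_res m l B D deg"
begin

lemma finite_B: "finite (B n)"
  using res by (simp add: min_graded_free_res_def)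

lemma B_empty: "l < n \<Longrightarrow> B n = {}"
  using res by (simp add: min_graded_free_res_def)

lemma deg_eq_0: "b \<in> B n \<Longrightarrow> m \<le> i \<Longrightarrow> deg n b i = 0"
  using res by (simp add: min_graded_free_res_def)

lemma homog_of_deg_D:
  "1 \<le> n \<Longrightarrow> b \<in> B n \<Longrightarrow> c \<in> B (n - 1) \<Longrightarrow> homog_of_deg (deg n b - deg (n - 1) c) (D n b c)"
  using res by (simp add: min_graded_free_res_def fun_diff_def)

lemma D_in_max_ideal: "1 \<le> n \<Longrightarrow> b \<in> B n \<Longrightarrow> c \<in> B (n - 1) \<Longrightarrow> in_max_ideal m (D n b c)"
  using res by (simp add: min_graded_free_res_def)

lemma cx_ker_eq_cx_image: "1 \<le> n \<Longrightarrow> cx_ker (poly_ring m) B D n = cx_image (poly_ring m) B D n"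
  using res by (simp add: min_graded_free_res_def)

lemma bar_diff_eq_0_iff:
  "1 \<le> n \<Longrightarrow> b \<in> B n \<Longrightarrow> c \<in> B (n - 1) \<Longrightarrow> bar_diff D n b c = 0 \<longleftrightarrow> D n b c = 0"
  unfolding bar_diff_def by (rule homog_eval_at_one_eq_0_iff[OF homog_of_deg_D])

lemma cx_supp_bar_diff_basis_vec:
  assumes "1 \<le> n" and "b \<in> B n"
  shows "cx_supp B (n - 1) (cx_diff B (bar_diff D) n (basis_vec b))
       = cx_supp B (n - 1) (cx_diff B D n (basis_vec b))"
  using assms bar_diff_eq_0_iff
  by (auto simp: cx_supp_def cx_diff_basis_vec[where B = B and n = n, OF finite_B assms(2)])

lemma cx_diff_in_cx_ker:
  assumes "1 \<le> n" and "y \<in> cx_elems (poly_ring m) B n"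
  shows "cx_diff B D n y \<in> cx_ker (poly_ring m) B D (n - 1)"
proof -
  have "cx_diff B D n y \<in> cx_image (poly_ring m) B D (n - 1)"
    using assms by (simp add: cx_image_def)
  then show ?thesis
    using cx_ker_eq_cx_image[of "n - 1"] by (cases "n - 1 = 0") (auto simp: cx_ker_def)
qed

lemma basis_vec_in_poly_elems: "b \<in> B n \<Longrightarrow> basis_vec b \<in> cx_elems (poly_ring m) B n"
  by (rule basis_vec_in_cx_elems) (simp_all add: poly_ring_def)

text \<open>Minimality: the entries of \<open>f\<^sub>n\<^sub>+\<^sub>1\<close> lie in the maximal ideal, so no element of its image
  has a coordinate with nonzero constant term.\<close>

lemma bar_diff_basis_vec_nonzero:
  assumes n: "1 \<le> n" and b: "b \<in> B n"
  shows "cx_diff B (bar_diff D) n (basis_vec b) \<noteq> (\<lambda>_. 0)"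
proof
  assume "cx_diff B (bar_diff D) n (basis_vec b) = (\<lambda>_. 0)"
  then have "cx_diff B D n (basis_vec b) = (\<lambda>_. 0)"
    using bar_diff_eq_0_iff[OF n b]
    by (simp add: fun_eq_iff cx_diff_basis_vec[where B = B, OF finite_B b]) metis
  then have "basis_vec b \<in> cx_image (poly_ring m) B D n"
    using cx_ker_eq_cx_image[OF n] n basis_vec_in_poly_elems[OF b] by (auto simp: cx_ker_def)
  then obtain w where "basis_vec b = cx_diff B D (Suc n) w"
    by (auto simp: cx_image_def)
  then have one: "1 = (\<Sum>b'\<in>B (Suc n). w b' * D (Suc n) b' b)"
    using b by (auto simp: cx_diff_def basis_vec_def dest: fun_cong[of _ _ b])
  have "Poly_Mapping.lookup (1 :: 'k mpoly) 0
      = (\<Sum>b'\<in>B (Suc n). Poly_Mapping.lookup (w b') 0 * Poly_Mapping.lookup (D (Suc n) b' b) 0)"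
    unfolding one by (simp only: lookup_sum lookup_mult_0)
  also have "\<dots> = 0"
    using b D_in_max_ideal[of "Suc n"] by (simp add: in_max_ideal_def)
  finally show False
    by simp
qed

text \<open>The image in \<open>Fbar\<^sub>k\<close> of the multidegree-\<open>t\<close> component of \<open>y \<in> F\<^sub>k\<close>: as \<open>c\<close> has
  multidegree \<open>deg k c\<close>, that component only sees the term of degree \<open>t - deg k c\<close> of \<open>y c\<close>.\<close>

definition degree_part :: "(nat \<Rightarrow> int) \<Rightarrow> nat \<Rightarrow> ('b \<Rightarrow> 'k mpoly) \<Rightarrow> ('b \<Rightarrow> 'k)" where
  "degree_part t k y = (\<lambda>c. coeff_of_deg (t - deg k c) (y c))"

lemma cx_diff_degree_part:
  assumes k: "1 \<le> k"
  shows "degree_part t (k - 1) (cx_diff B D k y) = cx_diff B (bar_diff D) k (degree_part t k y)"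
proof
  fix c
  show "degree_part t (k - 1) (cx_diff B D k y) c = cx_diff B (bar_diff D) k (degree_part t k y) c"
  proof (cases "c \<in> B (k - 1)")
    case True
    have "coeff_of_deg (t - deg (k - 1) c) (y b * D k b c) = degree_part t k y b * bar_diff D k b c"
      if "b \<in> B k" for b
      using coeff_of_deg_mult_homog[OF homog_of_deg_D[OF k that True]]
      by (simp add: degree_part_def bar_diff_def algebra_simps)
    with True show ?thesis
      by (simp add: degree_part_def cx_diff_def coeff_of_deg_sum)
  qed (simp add: degree_part_def cx_diff_def)
qed

lemma degree_part_cx_ker:
  assumes "z \<in> cx_ker (poly_ring m) B D k"
  shows "degree_part t k z \<in> cx_ker UNIV B (bar_diff D) k"
proof (rule cx_ker_chain_map[where \<phi> = "degree_part t", OF _ _ _ assms])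
  show "degree_part t j y \<in> cx_elems UNIV B j" if "y \<in> cx_elems (poly_ring m) B j" for j y
    using that by (simp add: cx_elems_def degree_part_def)
  show "degree_part t j (\<lambda>_. 0) = (\<lambda>_. 0)" for j
    by (simp add: degree_part_def)
qed (rule cx_diff_degree_part)

lemma degree_part_basis_vec: "degree_part (deg n b) n (basis_vec b) = basis_vec b"
proof -
  have "coeff_of_deg 0 (1 :: 'k mpoly) = 1"
    using coeff_of_deg_int_exp[of 0 "1 :: 'k mpoly"] by simp
  then show ?thesis
    by (auto simp: degree_part_def basis_vec_def fun_eq_iff)
qed

lemma bar_diff_basis_vec_in_cx_ker:
  assumes n: "1 \<le> n" and b: "b \<in> B n"
  shows "cx_diff B (bar_diff D) n (basis_vec b) \<in> cx_ker UNIV B (bar_diff D) (n - 1)"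
proof -
  have "cx_diff B (bar_diff D) n (basis_vec b) = degree_part (deg n b) (n - 1) (cx_diff B D n (basis_vec b))"
    using cx_diff_degree_part[OF n, of "deg n b" "basis_vec b"] by (simp add: degree_part_basis_vec)
  then show ?thesis
    using degree_part_cx_ker cx_diff_in_cx_ker[OF n basis_vec_in_poly_elems[OF b]] by simp
qed

lemma degree_part_nonzero:
  assumes "z c \<noteq> 0"
  obtains t where "degree_part t k z c \<noteq> 0"
proof -
  obtain \<alpha> where "\<alpha> \<in> Poly_Mapping.keys (z c)"
    using assms by (metis all_not_in_conv keys_eq_empty)
  then have "degree_part (int_exp \<alpha> + deg k c) k z c \<noteq> 0"
    by (simp add: degree_part_def in_keys_iff)
  then show ?thesis
    by (rule that)
qed

lemma cx_supp_degree_part: "cx_supp B k (degree_part t k z) \<subseteq> cx_supp B k z"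
  by (auto simp: cx_supp_def degree_part_def)

lemma cycle_min_supp_from_bar:
  assumes n: "1 \<le> n" and b: "b \<in> B n"
    and "cycle_min_supp UNIV B (bar_diff D) (n - 1) (cx_diff B (bar_diff D) n (basis_vec b))"
  shows "cycle_min_supp (poly_ring m) B D (n - 1) (cx_diff B D n (basis_vec b))"
  using assms(3)
proof (rule cycle_min_supp_transfer)
  show "cx_diff B D n (basis_vec b) \<in> cx_ker (poly_ring m) B D (n - 1)"
    by (rule cx_diff_in_cx_ker[OF n basis_vec_in_poly_elems[OF b]])
  show "cx_supp B (n - 1) (cx_diff B D n (basis_vec b))
      = cx_supp B (n - 1) (cx_diff B (bar_diff D) n (basis_vec b))"
    by (rule cx_supp_bar_diff_basis_vec[OF n b, symmetric])
next
  fix z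
  assume z: "z \<in> cx_ker (poly_ring m) B D (n - 1)" and "z \<noteq> (\<lambda>_. 0)"
  then obtain c where "z c \<noteq> 0"
    by auto
  then obtain t where "degree_part t (n - 1) z c \<noteq> 0"
    by (rule degree_part_nonzero)
  then have "degree_part t (n - 1) z \<noteq> (\<lambda>_. 0)"
    by (auto simp: fun_eq_iff)
  with degree_part_cx_ker[OF z] cx_supp_degree_part
  show "\<exists>z'\<in>cx_ker UNIV B (bar_diff D) (n - 1).
      z' \<noteq> (\<lambda>_. 0) \<and> cx_supp B (n - 1) z' \<subseteq> cx_supp B (n - 1) z"
    by blast
qed

definition top_deg :: "nat \<Rightarrow> int" where
  "top_deg i = (\<Sum>n\<le>l. \<Sum>b\<in>B n. \<bar>deg n b i\<bar>)"

lemma deg_le_top_deg: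
  assumes b: "b \<in> B n"
  shows "deg n b i \<le> top_deg i"
proof -
  have "n \<le> l"
    using b B_empty[of n] leI by blast
  have "deg n b i \<le> \<bar>deg n b i\<bar>"
    by simp
  also have "\<dots> \<le> (\<Sum>b\<in>B n. \<bar>deg n b i\<bar>)"
    using b finite_B by (intro member_le_sum) auto
  also have "\<dots> \<le> top_deg i"
    unfolding top_deg_def using \<open>n \<le> l\<close>
    by (intro member_le_sum[of n "{..l}" "\<lambda>n. \<Sum>b\<in>B n. \<bar>deg n b i\<bar>"]) (auto intro: sum_nonneg)
  finally show ?thesis .
qed

lemma top_deg_minus_deg_eq_0: "b \<in> B n \<Longrightarrow> m \<le> i \<Longrightarrow> top_deg i - deg n b i = 0"
  by (simp add: top_deg_def deg_eq_0)

lemma top_deg_minus_deg_in_range: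
  assumes b: "b \<in> B n"
  shows "top_deg - deg n b \<in> range int_exp"
proof -
  have "{i. top_deg i - deg n b i \<noteq> 0} \<subseteq> {..<m}"
    using top_deg_minus_deg_eq_0[OF b] by (auto simp: not_less[symmetric])
  then show ?thesis
    using b deg_le_top_deg by (auto simp: range_int_exp intro: finite_subset)
qed

definition homog_exp :: "nat \<Rightarrow> 'b \<Rightarrow> nat \<Rightarrow>\<^sub>0 nat" where
  "homog_exp n b = inv int_exp (top_deg - deg n b)"

lemma int_exp_homog_exp: "b \<in> B n \<Longrightarrow> int_exp (homog_exp n b) = top_deg - deg n b"
  unfolding homog_exp_def by (rule f_inv_into_f[OF top_deg_minus_deg_in_range])

lemma keys_homog_exp:
  assumes b: "b \<in> B n"
  shows "Poly_Mapping.keys (homog_exp n b) \<subseteq> {..<m}"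
proof
  fix i
  assume "i \<in> Poly_Mapping.keys (homog_exp n b)"
  then have "int_exp (homog_exp n b) i \<noteq> 0"
    by (simp add: int_exp_def in_keys_iff)
  then have "top_deg i - deg n b i \<noteq> 0"
    by (simp add: int_exp_homog_exp[OF b])
  then show "i \<in> {..<m}"
    using top_deg_minus_deg_eq_0[OF b] by (auto simp: not_less[symmetric])
qed

text \<open>Each basis element \<open>b\<close> is replaced by the element \<open>x\<^bsup>top_deg - deg n b\<^esup> b\<close>, homogeneous of
  the common multidegree \<open>top_deg\<close>; this makes \<open>homogenize\<close> a chain map from \<open>Fbar\<close> to \<open>F\<close>.\<close>

definition homogenize :: "nat \<Rightarrow> ('b \<Rightarrow> 'k) \<Rightarrow> ('b \<Rightarrow> 'k mpoly)" where
  "homogenize n v = (\<lambda>b. Poly_Mapping.single (homog_exp n b) (v b))"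

lemma single_homog_exp_mult_D:
  assumes n: "1 \<le> n" and b: "b \<in> B n" and c: "c \<in> B (n - 1)"
  shows "Poly_Mapping.single (homog_exp n b) a * D n b c
       = Poly_Mapping.single (homog_exp (n - 1) c) (a * bar_diff D n b c)"
proof (cases "D n b c = 0")
  case False
  with homog_of_deg_D[OF n b c] obtain \<alpha> d where exp: "int_exp \<alpha> = deg n b - deg (n - 1) c"
    and D: "D n b c = Poly_Mapping.single \<alpha> d"
    by (rule homog_of_degE)
  have "int_exp (homog_exp n b + \<alpha>) = int_exp (homog_exp (n - 1) c)"
    unfolding int_exp_add exp int_exp_homog_exp[OF b] int_exp_homog_exp[OF c] by simp
  then have "homog_exp n b + \<alpha> = homog_exp (n - 1) c"
    by (simp add: inj_eq[OF inj_int_exp])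
  then show ?thesis
    by (simp add: D bar_diff_def mult_single)
qed (simp add: bar_diff_def eval_at_one_def)

lemma cx_diff_homogenize:
  assumes n: "1 \<le> n"
  shows "cx_diff B D n (homogenize n v) = homogenize (n - 1) (cx_diff B (bar_diff D) n v)"
proof
  fix c
  show "cx_diff B D n (homogenize n v) c = homogenize (n - 1) (cx_diff B (bar_diff D) n v) c"
  proof (cases "c \<in> B (n - 1)")
    case True
    have "(\<Sum>b\<in>B n. homogenize n v b * D n b c)
        = (\<Sum>b\<in>B n. Poly_Mapping.single (homog_exp (n - 1) c) (v b * bar_diff D n b c))"
      by (rule sum.cong) (simp_all add: homogenize_def single_homog_exp_mult_D[OF n _ True])
    with True show ?thesis
      by (simp add: cx_diff_def homogenize_def single_sum)
  qed (simp add: cx_diff_def homogenize_def)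
qed

lemma homogenize_eq_0_iff [simp]: "homogenize n v c = 0 \<longleftrightarrow> v c = 0"
  by (simp add: homogenize_def) (metis lookup_single_eq single_zero)

lemma homogenize_in_cx_elems: "v \<in> cx_elems UNIV B n \<Longrightarrow> homogenize n v \<in> cx_elems (poly_ring m) B n"
  using keys_homog_exp by (auto simp: cx_elems_def homogenize_def poly_ring_def)

lemma homogenize_cx_ker:
  assumes "z \<in> cx_ker UNIV B (bar_diff D) k"
  shows "homogenize k z \<in> cx_ker (poly_ring m) B D k"
proof (rule cx_ker_chain_map[where \<phi> = homogenize, OF _ homogenize_in_cx_elems _ assms])
  show "homogenize (j - 1) (cx_diff B (bar_diff D) j y) = cx_diff B D j (homogenize j y)" if "1 \<le> j" for j y
    by (rule cx_diff_homogenize[OF that, symmetric])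
  show "homogenize j (\<lambda>_. 0) = (\<lambda>_. 0)" for j
    by (simp add: homogenize_def)
qed

lemma cycle_min_supp_to_bar:
  assumes n: "1 \<le> n" and b: "b \<in> B n"
    and "cycle_min_supp (poly_ring m) B D (n - 1) (cx_diff B D n (basis_vec b))"
  shows "cycle_min_supp UNIV B (bar_diff D) (n - 1) (cx_diff B (bar_diff D) n (basis_vec b))"
  using assms(3)
proof (rule cycle_min_supp_transfer)
  show "cx_diff B (bar_diff D) n (basis_vec b) \<in> cx_ker UNIV B (bar_diff D) (n - 1)"
    by (rule bar_diff_basis_vec_in_cx_ker[OF n b])
  show "cx_supp B (n - 1) (cx_diff B (bar_diff D) n (basis_vec b))
      = cx_supp B (n - 1) (cx_diff B D n (basis_vec b))"
    by (rule cx_supp_bar_diff_basis_vec[OF n b])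
next
  fix z
  assume "z \<in> cx_ker UNIV B (bar_diff D) (n - 1)" and "z \<noteq> (\<lambda>_. 0)"
  moreover have "cx_supp B (n - 1) (homogenize (n - 1) z) = cx_supp B (n - 1) z"
    by (simp add: cx_supp_def)
  ultimately show "\<exists>z'\<in>cx_ker (poly_ring m) B D (n - 1).
      z' \<noteq> (\<lambda>_. 0) \<and> cx_supp B (n - 1) z' \<subseteq> cx_supp B (n - 1) z"
    by (intro bexI[of _ "homogenize (n - 1) z"] homogenize_cx_ker) (auto simp: fun_eq_iff)
qed

end

theorem mainTheorem4:
  fixes m l :: nat
    and B :: "nat \<Rightarrow> 'b set"
    and D :: "nat \<Rightarrow> 'b \<Rightarrow> 'b \<Rightarrow> ('k::field) mpoly"
    and deg :: "nat \<Rightarrow> 'b \<Rightarrow> nat \<Rightarrow> int"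
  assumes res: "min_graded_free_res m l B D deg"
  shows "(\<forall>n\<ge>1. \<forall>b\<in>B n. cx_diff B (bar_diff D) n (basis_vec b) \<noteq> (\<lambda>_. 0))
       \<and> (basis_min_supp UNIV B (bar_diff D) \<longrightarrow> basis_min_supp (poly_ring m) B D)
       \<and> (basis_min_supp (poly_ring m) B D \<and> coker_torsion_free m B D
            \<longrightarrow> basis_min_supp UNIV B (bar_diff D))"
proof -
  interpret graded_min_res m l B D deg
    by (rule graded_min_res.intro[OF res])
  show ?thesis
    unfolding basis_min_supp_def
    using bar_diff_basis_vec_nonzero cycle_min_supp_from_bar cycle_min_supp_to_bar by blast
qed

end
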